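(* Let $\Omega_n=\dfrac{\pi^{n/2}}{\Gamma\left(\frac n2+1\right)}$ for $n\in\mathbb{N}_0$. As $n\to\infty$, the following asymptotic series holds: \[ \ln\frac{\Omega_{n-1}}{\Omega_n}=\frac12\ln\frac{n}{2\pi}+\sum_{j=1}^\infty\frac{\mu_j}{n^j},\qquad \mu_j=(-1)^j\left[B_{j+1}\left(\tfrac12\right)-B_{j+1}(1)\right]\frac{2^j}{j(j+1)}\quad(j\in\mathbb{N}), \] where $B_m(x)$ denote the Bernoulli polynomials.
   Context: $\Omega_n$ is the volume of the unit ball in $\mathbb{R}^n$; $\Gamma$ is Euler's gamma function. The Bernoulli polynomials are defined by $\frac{te^{xt}}{e^t-1}=\sum_{m\ge0}B_m(x)\frac{t^m}{m!}$. The equality with an infinite series is meant as an asymptotic expansion: for every $N$, the difference between the left side and $\frac12\ln\frac n{2\pi}+\sum_{j=1}^N\mu_jn^{-j}$ is $O(n^{-N-1})$ as $n\to\infty$. *)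

theory Defs
  imports "HOL-Analysis.Analysis" "HOL-Computational_Algebra.Formal_Power_Series"
    "HOL-Library.Landau_Symbols"
begin

definition Omega :: "nat \<Rightarrow> real" where
  "Omega n = pi powr (real n / 2) / Gamma (real n / 2 + 1)"

text \<open>Bernoulli polynomials via the generating function
  t e^(xt) / (e^t - 1) = sum B_m(x) t^m / m!, read as an identity of formal power series.\<close>
definition bernpoly :: "nat \<Rightarrow> real \<Rightarrow> real" where
  "bernpoly m x = fact m * fps_nth (fps_X * fps_exp x / (fps_exp 1 - 1)) m"

definition mu :: "nat \<Rightarrow> real" where
  "mu j = (-1) ^ j * (bernpoly (j + 1) (1/2) - bernpoly (j + 1) 1) * 2 ^ j / (real j * real (j + 1))"

end

theory Submission
  imports Defs "HOL-Real_Asymp.Real_Asymp"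
begin

(*
  Put x = n/2. Then ln (Omega (n - 1) / Omega n) - ln (n / (2 pi)) / 2 equals
  F x = ln Gamma (x + 1) - ln Gamma (x + 1/2) - ln x / 2 (gamma_ratio_err), and the partial sum
  of the series is P x = sum_{k=1..N} c_k / x^k with c_k = mu_k / 2^k (gamma_ratio_poly). Log-convexity of Gamma squeezes F to 0 at
  infinity. The increment F (x + 1) - F x = ln (1 + u) / 2 - ln (1 + u/2), u = 1/x, and the
  increment of P are both power series in u, and their coefficients agree up to u^(N+1): this is
  the binomial recursion of the Bernoulli polynomials. So F - P changes by O(x^-(N+2)) per unit
  step, and since it vanishes at infinity, summing the steps gives F x - P x = O(x^-(N+1)).
*)

lemma bernpoly_fps_mult_denominator:
  fixes y :: real
  shows "fps_X * fps_exp y / (fps_exp 1 - 1) * (fps_exp 1 - 1) = fps_X * fps_exp y"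
proof -
  have "subdegree (fps_exp (1::real) - 1) = 1" "subdegree (fps_X * fps_exp y) = 1"
    by (auto intro!: subdegreeI)
  then have "fps_exp 1 - 1 dvd fps_X * fps_exp y"
    by (subst fps_dvd_iff) (auto simp del: fps_exp_nth)
  then show ?thesis by simp
qed

lemma bernpoly_binomial_sum:
  "(\<Sum>m\<le>p. real (Suc p choose m) * bernpoly m y) = real (Suc p) * y ^ p"
proof -
  define B where "B = fps_X * fps_exp y / (fps_exp 1 - 1)"
  have "fps_nth (B * (fps_exp 1 - 1)) (Suc p) = y ^ p / fact p"
    by (simp add: B_def bernpoly_fps_mult_denominator)
  moreover have "fps_nth (B * (fps_exp 1 - 1)) (Suc p) = (\<Sum>m\<le>p. fps_nth B m / fact (Suc p - m))"
    by (simp add: fps_mult_nth sum.atLeast0_atMost_Suc atLeast0AtMost)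
  ultimately have "(\<Sum>m\<le>p. fps_nth B m / fact (Suc p - m)) = y ^ p / fact p"
    by simp
  moreover have "(\<Sum>m\<le>p. real (Suc p choose m) * bernpoly m y)
      = fact (Suc p) * (\<Sum>m\<le>p. fps_nth B m / fact (Suc p - m))"
    unfolding sum_distrib_left
    by (intro sum.cong refl) (simp add: bernpoly_def B_def binomial_fact field_simps)
  ultimately show ?thesis
    by (simp add: field_simps)
qed

lemma bernpoly_0 [simp]: "bernpoly 0 y = 1"
  using bernpoly_binomial_sum[of 0 y] by simp

lemma bernpoly_1 [simp]: "bernpoly (Suc 0) y = y - 1/2"
  using bernpoly_binomial_sum[of 1 y] by (simp add: numeral_2_eq_2)

definition bernpoly_gap :: "nat \<Rightarrow> real" where
  "bernpoly_gap m = bernpoly m (1/2) - bernpoly m 1"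

lemma bernpoly_gap_binomial_sum:
  assumes "1 \<le> p"
  shows "(\<Sum>k=1..p-1. real (Suc p choose Suc k) * bernpoly_gap (Suc k))
           = real (Suc p) * ((1/2) ^ p - 1/2)"
proof -
  have "{..p} = {0, 1} \<union> {2..p}"
    using assms by auto
  then have "(\<Sum>m\<le>p. real (Suc p choose m) * bernpoly_gap m)
      = - real (Suc p) / 2 + (\<Sum>m=2..p. real (Suc p choose m) * bernpoly_gap m)"
    by (simp add: sum.union_disjoint bernpoly_gap_def field_simps)
  moreover have "(\<Sum>m=2..p. real (Suc p choose m) * bernpoly_gap m)
      = (\<Sum>k=1..p-1. real (Suc p choose Suc k) * bernpoly_gap (Suc k))"
    using assms by (intro sum.reindex_bij_witness[of _ Suc "\<lambda>m. m - 1"]) auto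
  moreover have "(\<Sum>m\<le>p. real (Suc p choose m) * bernpoly_gap m) = real (Suc p) * ((1/2) ^ p - 1)"
    using bernpoly_binomial_sum[of p "1/2"] bernpoly_binomial_sum[of p 1]
    by (simp add: bernpoly_gap_def right_diff_distrib sum_subtractf)
  moreover have "real (Suc p) * ((1/2) ^ p - 1) = real (Suc p) * ((1/2) ^ p - 1/2) - real (Suc p) / 2"
    by (simp add: algebra_simps)
  ultimately show ?thesis
    by linarith
qed

definition gamma_ratio_coeff :: "nat \<Rightarrow> real" where
  "gamma_ratio_coeff k = (-1) ^ k * bernpoly_gap (Suc k) / (real k * real (Suc k))"

lemma mu_eq_gamma_ratio_coeff: "mu j = 2 ^ j * gamma_ratio_coeff j"
  by (simp add: mu_def gamma_ratio_coeff_def bernpoly_gap_def)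

lemma gbinomial_minus_of_nat:
  assumes "1 \<le> k" "k \<le> p"
  shows "(- real k) gchoose (p - k) = (-1) ^ (p - k) * real ((p - 1) choose (k - 1))"
proof -
  have "(- real k) gchoose (p - k) = (-1) ^ (p - k) * ((real k + real (p - k) - 1) gchoose (p - k))"
    by (rule gbinomial_minus)
  also have "(real k + real (p - k) - 1) gchoose (p - k) = real ((p - 1) choose (k - 1))"
  proof -
    have "real k + real (p - k) - 1 = real (p - 1)"
      using assms by simp
    moreover have "(p - 1) choose (p - k) = (p - 1) choose (k - 1)"
      using assms binomial_symmetric[of "k - 1" "p - 1"] by (simp add: Suc_diff_le)
    ultimately show ?thesis
      by (metis binomial_gbinomial)
  qed
  finally show ?thesis .
qed

lemma binomial_Suc_Suc_ratio:
  assumes "1 \<le> k" "1 \<le> p"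
  shows "real ((p - 1) choose (k - 1)) / (real k * real (Suc k))
           = real (Suc p choose Suc k) / (real p * real (Suc p))"
proof -
  have "p * ((p - 1) choose (k - 1)) = (p choose k) * k"
    using Suc_times_binomial_eq[of "p - 1" "k - 1"] assms by simp
  then have "Suc p * p * ((p - 1) choose (k - 1)) = (Suc p choose Suc k) * Suc k * k"
    using Suc_times_binomial_eq[of p k] by (metis mult.assoc)
  then have "real (Suc p) * real p * real ((p - 1) choose (k - 1))
      = real (Suc p choose Suc k) * real (Suc k) * real k"
    by (metis of_nat_mult)
  then show ?thesis
    using assms by (simp add: divide_simps mult_ac del: binomial_Suc_Suc of_nat_Suc)
qed

lemma gamma_ratio_coeff_convolution:
  assumes "1 \<le> p"
  shows "(\<Sum>k=1..p-1. gamma_ratio_coeff k * ((- real k) gchoose (p - k)))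
           = (-1) ^ Suc p / real p * (1/2 - (1/2) ^ p)"
proof -
  have summand: "gamma_ratio_coeff k * ((- real k) gchoose (p - k))
      = (-1) ^ p / (real p * real (Suc p)) * (real (Suc p choose Suc k) * bernpoly_gap (Suc k))"
    if "k \<in> {1..p-1}" for k
  proof -
    from that have k: "1 \<le> k" "k \<le> p" by auto
    have sign: "(-1::real) ^ k * (-1) ^ (p - k) = (-1) ^ p"
      using k by (simp add: power_add[symmetric])
    have "gamma_ratio_coeff k * ((- real k) gchoose (p - k))
        = ((-1) ^ k * (-1) ^ (p - k)) * bernpoly_gap (Suc k)
          * (real ((p - 1) choose (k - 1)) / (real k * real (Suc k)))"
      unfolding gamma_ratio_coeff_def gbinomial_minus_of_nat[OF k] by (simp add: mult_ac)
    also have "\<dots> = (-1) ^ p * bernpoly_gap (Suc k)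
          * (real (Suc p choose Suc k) / (real p * real (Suc p)))"
      by (simp only: sign binomial_Suc_Suc_ratio[OF k(1) assms])
    finally show ?thesis
      by simp
  qed
  have "(\<Sum>k=1..p-1. gamma_ratio_coeff k * ((- real k) gchoose (p - k)))
      = (\<Sum>k=1..p-1. (-1) ^ p / (real p * real (Suc p))
          * (real (Suc p choose Suc k) * bernpoly_gap (Suc k)))"
    by (intro sum.cong refl summand)
  also have "\<dots> = (-1) ^ p / (real p * real (Suc p))
      * (\<Sum>k=1..p-1. real (Suc p choose Suc k) * bernpoly_gap (Suc k))"
    by (rule sum_distrib_left[symmetric])
  also have "\<dots> = (-1) ^ p / (real p * real (Suc p)) * (real (Suc p) * ((1/2) ^ p - 1/2))"
    by (simp only: bernpoly_gap_binomial_sum[OF assms])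
  also have "\<dots> = (-1) ^ Suc p / real p * (1/2 - (1/2) ^ p)"
  proof -
    from assms have "real p \<noteq> 0" by simp
    have "(-1) ^ p / (real p * real (Suc p)) * (real (Suc p) * (h - 1/2))
        = (-1) ^ Suc p / real p * (1/2 - h)" for h :: real
      using \<open>real p \<noteq> 0\<close> by (simp add: divide_simps) (simp add: algebra_simps)
    then show ?thesis .
  qed
  finally show ?thesis .
qed

lemma powser_bound_if_coeffs_vanish:
  fixes a :: "nat \<Rightarrow> real"
  assumes "summable (\<lambda>j. a j * c ^ j)" "0 < r" "r < \<bar>c\<bar>" "\<And>j. j < m \<Longrightarrow> a j = 0"
  obtains S where "\<And>u. \<bar>u\<bar> \<le> r \<Longrightarrow> \<bar>\<Sum>j. a j * u ^ j\<bar> \<le> S * \<bar>u\<bar> ^ m"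
proof (rule that[of "(\<Sum>j. \<bar>a j\<bar> * r ^ j) / r ^ m"])
  fix u :: real
  assume u: "\<bar>u\<bar> \<le> r"
  have summable: "summable (\<lambda>j. \<bar>a j\<bar> * r ^ j)"
    using powser_insidea[OF assms(1), of r] assms(2,3) by (simp add: abs_mult power_abs)
  have termwise: "\<bar>a j * u ^ j\<bar> \<le> \<bar>u\<bar> ^ m / r ^ m * (\<bar>a j\<bar> * r ^ j)" for j
  proof (cases "j < m")
    case True
    then show ?thesis
      using assms(4) by simp
  next
    case False
    have "\<bar>u\<bar> ^ j = \<bar>u\<bar> ^ m * \<bar>u\<bar> ^ (j - m)"
      using False by (simp add: power_add[symmetric])
    also have "\<dots> \<le> \<bar>u\<bar> ^ m * r ^ (j - m)"
      using u by (intro mult_left_mono power_mono) auto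
    also have "r ^ (j - m) = r ^ j / r ^ m"
      using False assms(2) by (simp add: power_diff)
    finally show ?thesis
      using assms(2) by (simp add: abs_mult power_abs mult_left_mono field_simps)
  qed
  have "\<bar>\<Sum>j. a j * u ^ j\<bar> \<le> (\<Sum>j. \<bar>u\<bar> ^ m / r ^ m * (\<bar>a j\<bar> * r ^ j))"
    using norm_suminf_le[of "\<lambda>j. a j * u ^ j", OF _ summable_mult[OF summable]] termwise
    by (simp only: real_norm_def)
  also have "\<dots> = \<bar>u\<bar> ^ m / r ^ m * (\<Sum>j. \<bar>a j\<bar> * r ^ j)"
    by (rule suminf_mult[OF summable])
  finally show "\<bar>\<Sum>j. a j * u ^ j\<bar> \<le> (\<Sum>j. \<bar>a j\<bar> * r ^ j) / r ^ m * \<bar>u\<bar> ^ m"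
    by (simp add: field_simps)
qed

definition log_ratio_coeff :: "nat \<Rightarrow> real" where
  "log_ratio_coeff j = (if j = 0 then 0 else (-1) ^ Suc j / real j * (1/2 - (1/2) ^ j))"

lemma log_ratio_coeff_sums:
  assumes "\<bar>u\<bar> < 1"
  shows "(\<lambda>j. log_ratio_coeff j * u ^ j) sums (ln (1 + u) / 2 - ln (1 + u / 2))"
proof -
  have "(\<lambda>j. - ((-u) ^ j) / real j / 2 - - ((-(u / 2)) ^ j) / real j)
      sums (ln (1 + u) / 2 - ln (1 + u / 2))"
    using assms by (intro sums_diff sums_divide ln_series') auto
  moreover have "- ((-u) ^ j) / real j / 2 - - ((-(u / 2)) ^ j) / real j = log_ratio_coeff j * u ^ j"
    for j
    by (cases "j = 0")
      (simp_all add: log_ratio_coeff_def power_minus[of u] power_minus[of "u/2"]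
        field_simps)
  ultimately show ?thesis
    by simp
qed

definition binomial_shift_coeff :: "nat \<Rightarrow> nat \<Rightarrow> real" where
  "binomial_shift_coeff k j =
     (if k \<le> j then (- real k) gchoose (j - k) else 0) - (if j = k then 1 else 0)"

lemma binomial_shift_coeff_sums:
  assumes "\<bar>u\<bar> < 1"
  shows "(\<lambda>j. binomial_shift_coeff k j * u ^ j) sums (u ^ k * (1 + u) powr (- real k) - u ^ k)"
proof -
  define f where "f j = (if k \<le> j then ((- real k) gchoose (j - k)) * u ^ j else 0)" for j
  have "(\<lambda>i. u ^ k * (((- real k) gchoose i) * u ^ i)) sums (u ^ k * (1 + u) powr (- real k))"
    using assms by (intro sums_mult gen_binomial_real)
  moreover have "(\<lambda>i. f (i + k)) = (\<lambda>i. u ^ k * (((- real k) gchoose i) * u ^ i))"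
    by (simp add: f_def power_add fun_eq_iff)
  ultimately have "f sums (u ^ k * (1 + u) powr (- real k))"
    by (subst sums_zero_iff_shift[symmetric, of k]) (auto simp: f_def)
  then have "(\<lambda>j. f j - (if j = k then u ^ j else 0)) sums (u ^ k * (1 + u) powr (- real k) - u ^ k)"
    by (intro sums_diff sums_single)
  moreover have "f j - (if j = k then u ^ j else 0) = binomial_shift_coeff k j * u ^ j" for j
    by (simp add: f_def binomial_shift_coeff_def left_diff_distrib)
  ultimately show ?thesis
    by simp
qed

(* step_remainder N (1/x) is the increment of F - P from x to x + 1, see gamma_ratio_remainder_step. *)
definition step_remainder :: "nat \<Rightarrow> real \<Rightarrow> real" where
  "step_remainder N u = ln (1 + u) / 2 - ln (1 + u / 2)
     - (\<Sum>k=1..N. gamma_ratio_coeff k * (u ^ k * (1 + u) powr (- real k) - u ^ k))"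

definition step_remainder_coeff :: "nat \<Rightarrow> nat \<Rightarrow> real" where
  "step_remainder_coeff N j =
     log_ratio_coeff j - (\<Sum>k=1..N. gamma_ratio_coeff k * binomial_shift_coeff k j)"

lemma step_remainder_coeff_sums:
  assumes "\<bar>u\<bar> < 1"
  shows "(\<lambda>j. step_remainder_coeff N j * u ^ j) sums step_remainder N u"
proof -
  have "(\<lambda>j. log_ratio_coeff j * u ^ j
          - (\<Sum>k=1..N. gamma_ratio_coeff k * (binomial_shift_coeff k j * u ^ j)))
      sums step_remainder N u"
    unfolding step_remainder_def using assms
    by (intro sums_diff sums_sum sums_mult log_ratio_coeff_sums binomial_shift_coeff_sums)
  then show ?thesis
    by (simp add: step_remainder_coeff_def left_diff_distrib sum_distrib_right mult.assoc)
qed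

lemma step_remainder_coeff_eq_0:
  assumes "j \<le> N + 1"
  shows "step_remainder_coeff N j = 0"
proof (cases "j = 0")
  case True
  then show ?thesis
    by (simp add: step_remainder_coeff_def log_ratio_coeff_def binomial_shift_coeff_def)
next
  case False
  have "{1..N} = {1..j-1} \<union> {j..N}"
    using False assms by auto
  then have "(\<Sum>k=1..N. gamma_ratio_coeff k * binomial_shift_coeff k j)
      = (\<Sum>k=1..j-1. gamma_ratio_coeff k * binomial_shift_coeff k j)
        + (\<Sum>k=j..N. gamma_ratio_coeff k * binomial_shift_coeff k j)"
    by (simp add: sum.union_disjoint)
  also have "(\<Sum>k=j..N. gamma_ratio_coeff k * binomial_shift_coeff k j) = 0"
    by (intro sum.neutral) (auto simp: binomial_shift_coeff_def)
  also have "(\<Sum>k=1..j-1. gamma_ratio_coeff k * binomial_shift_coeff k j)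
      = (\<Sum>k=1..j-1. gamma_ratio_coeff k * ((- real k) gchoose (j - k)))"
    by (intro sum.cong) (auto simp: binomial_shift_coeff_def)
  finally show ?thesis
    using False gamma_ratio_coeff_convolution[of j]
    by (simp add: step_remainder_coeff_def log_ratio_coeff_def)
qed

lemma step_remainder_bound:
  obtains S where "\<And>u. \<bar>u\<bar> \<le> 1/2 \<Longrightarrow> \<bar>step_remainder N u\<bar> \<le> S * \<bar>u\<bar> ^ (N + 2)"
proof -
  have summable: "summable (\<lambda>j. step_remainder_coeff N j * (3/4) ^ j)"
    using step_remainder_coeff_sums[of "3/4" N] by (simp add: sums_summable)
  have vanish: "\<And>j. j < N + 2 \<Longrightarrow> step_remainder_coeff N j = 0"
    by (simp add: step_remainder_coeff_eq_0)
  show ?thesis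
  proof (rule powser_bound_if_coeffs_vanish[where r = "1/2", OF summable _ _ vanish])
    fix S
    assume S: "\<And>u. \<bar>u\<bar> \<le> 1/2 \<Longrightarrow>
      \<bar>\<Sum>j. step_remainder_coeff N j * u ^ j\<bar> \<le> S * \<bar>u\<bar> ^ (N + 2)"
    show thesis
    proof (rule that[of S])
      fix u :: real
      assume "\<bar>u\<bar> \<le> 1/2"
      with S[of u] step_remainder_coeff_sums[of u N]
      show "\<bar>step_remainder N u\<bar> \<le> S * \<bar>u\<bar> ^ (N + 2)"
        by (simp add: sums_iff)
    qed
  qed simp_all
qed

lemma ln_Gamma_real_plus1:
  fixes x :: real
  assumes "x > 0"
  shows "ln (Gamma (x + 1)) = ln (Gamma x) + ln x"
proof -
  have "x \<notin> \<int>\<^sub>\<le>\<^sub>0"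
    using assms by (auto elim!: nonpos_Ints_cases)
  then show ?thesis
    using assms by (simp add: Gamma_plus1 ln_mult_pos)
qed

lemma ln_Gamma_midpoint_le:
  fixes x :: real
  assumes "x > 0"
  shows "ln (Gamma (x + 1/2)) \<le> (ln (Gamma x) + ln (Gamma (x + 1))) / 2"
proof -
  have "(ln \<circ> Gamma) ((1 - 1/2) *\<^sub>R x + (1/2) *\<^sub>R (x + 1))
      \<le> (1 - 1/2) * (ln \<circ> Gamma) x + (1/2) * (ln \<circ> Gamma) (x + 1)"
    using assms by (intro convex_onD[OF log_convex_Gamma_real]) auto
  moreover have "(1 - 1/2) *\<^sub>R x + (1/2) *\<^sub>R (x + 1) = x + 1/2"
    by (simp add: field_simps)
  ultimately show ?thesis
    by simp
qed

definition gamma_ratio_err :: "real \<Rightarrow> real" where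
  "gamma_ratio_err x = ln (Gamma (x + 1)) - ln (Gamma (x + 1/2)) - ln x / 2"

lemma gamma_ratio_err_bounds:
  fixes x :: real
  assumes "x > 0"
  shows "0 \<le> gamma_ratio_err x" "gamma_ratio_err x \<le> (ln (x + 1/2) - ln x) / 2"
proof -
  show "0 \<le> gamma_ratio_err x"
    using ln_Gamma_midpoint_le[OF assms] ln_Gamma_real_plus1[OF assms]
    by (simp add: gamma_ratio_err_def)
  have "ln (Gamma (x + 1)) \<le> (ln (Gamma (x + 1/2)) + ln (Gamma (x + 3/2))) / 2"
    "ln (Gamma (x + 3/2)) = ln (Gamma (x + 1/2)) + ln (x + 1/2)"
    using assms ln_Gamma_midpoint_le[of "x + 1/2"] ln_Gamma_real_plus1[of "x + 1/2"]
    by (simp_all add: add.assoc)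
  then show "gamma_ratio_err x \<le> (ln (x + 1/2) - ln x) / 2"
    by (simp add: gamma_ratio_err_def)
qed

lemma gamma_ratio_err_tendsto_0: "(gamma_ratio_err \<longlongrightarrow> 0) at_top"
proof (rule tendsto_sandwich)
  show "\<forall>\<^sub>F x in at_top. 0 \<le> gamma_ratio_err x"
    by (intro eventually_mono[OF eventually_gt_at_top[of 0]] gamma_ratio_err_bounds)
  show "\<forall>\<^sub>F x in at_top. gamma_ratio_err x \<le> (ln (x + 1/2) - ln x) / 2"
    by (intro eventually_mono[OF eventually_gt_at_top[of 0]] gamma_ratio_err_bounds)
  show "((\<lambda>x::real. (ln (x + 1/2) - ln x) / 2) \<longlongrightarrow> 0) at_top"
    by real_asymp
qed simp

lemma gamma_ratio_err_step:
  fixes x :: real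
  assumes "x > 0"
  shows "gamma_ratio_err (x + 1) - gamma_ratio_err x = ln (1 + 1/x) / 2 - ln (1 + 1/x / 2)"
proof -
  have "ln (Gamma (x + 1 + 1)) = ln (Gamma (x + 1)) + ln (x + 1)"
    "ln (Gamma (x + 1 + 1/2)) = ln (Gamma (x + 1/2)) + ln (x + 1/2)"
    using assms ln_Gamma_real_plus1[of "x + 1"] ln_Gamma_real_plus1[of "x + 1/2"]
    by (simp_all add: add_ac)
  moreover have "ln (x + 1) = ln x + ln (1 + 1/x)" "ln (x + 1/2) = ln x + ln (1 + 1/x / 2)"
  proof -
    have "x * (1 + 1/x) = x + 1" "x * (1 + 1/x / 2) = x + 1/2"
      using assms by (simp_all add: field_simps)
    moreover have "1 + 1/x > 0" "1 + 1/x / 2 > 0"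
      using assms by (simp_all add: add_pos_pos)
    ultimately show "ln (x + 1) = ln x + ln (1 + 1/x)" "ln (x + 1/2) = ln x + ln (1 + 1/x / 2)"
      using assms by (metis ln_mult_pos)+
  qed
  ultimately show ?thesis
    by (simp add: gamma_ratio_err_def field_simps)
qed

definition gamma_ratio_poly :: "nat \<Rightarrow> real \<Rightarrow> real" where
  "gamma_ratio_poly N x = (\<Sum>k=1..N. gamma_ratio_coeff k / x ^ k)"

lemma gamma_ratio_poly_step:
  fixes x :: real
  assumes "x > 0"
  shows "gamma_ratio_poly N (x + 1) - gamma_ratio_poly N x
           = (\<Sum>k=1..N. gamma_ratio_coeff k * ((1/x) ^ k * (1 + 1/x) powr (- real k) - (1/x) ^ k))"
proof -
  have "(1/x) ^ k * (1 + 1/x) powr (- real k) = 1 / (x + 1) ^ k" for k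
  proof -
    have "1 + 1/x > 0"
      using assms by (simp add: add_pos_pos)
    then have "(1 + 1/x) powr (- real k) = 1 / (1 + 1/x) ^ k"
      by (simp add: powr_minus_divide powr_realpow)
    then show ?thesis
      using assms by (simp add: field_simps power_mult_distrib[symmetric])
  qed
  then show ?thesis
    by (simp add: gamma_ratio_poly_def sum_subtractf[symmetric] right_diff_distrib power_one_over)
qed

lemma gamma_ratio_poly_tendsto_0: "(gamma_ratio_poly N \<longlongrightarrow> 0) at_top"
proof -
  have "((\<lambda>x. \<Sum>k=1..N. gamma_ratio_coeff k / x ^ k) \<longlongrightarrow> (\<Sum>k=1..N. 0)) at_top"
  proof (intro tendsto_sum tendsto_divide_0[OF tendsto_const] filterlim_at_top_imp_at_infinity)
    fix k assume "k \<in> {1..N}"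
    then show "filterlim (\<lambda>x::real. x ^ k) at_top at_top"
      by (intro filterlim_pow_at_top filterlim_ident) auto
  qed
  then show ?thesis
    by (simp add: gamma_ratio_poly_def[abs_def])
qed

lemma gamma_ratio_remainder_step:
  fixes x :: real
  assumes "x > 0"
  shows "(gamma_ratio_err (x + 1) - gamma_ratio_poly N (x + 1)) - (gamma_ratio_err x - gamma_ratio_poly N x)
           = step_remainder N (1/x)"
  using gamma_ratio_err_step[OF assms] gamma_ratio_poly_step[OF assms, of N]
  by (simp add: step_remainder_def)

lemma sum_inverse_power_shift_le:
  fixes x :: real
  assumes "x \<ge> 2"
  shows "(\<Sum>i<K. 1 / (x + real i) ^ (m + 2)) \<le> 2 / x ^ (m + 1)"
proof -
  have "1 / (x + real i) ^ (m + 2) \<le> 1 / x ^ m * (1 / (x + real i - 1) - 1 / (x + real (Suc i) - 1))"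
    for i
  proof -
    have xi: "x + real i \<ge> 2"
      using assms by simp
    have "1 / (x + real i) ^ (m + 2) = 1 / (x + real i) ^ m * (1 / (x + real i) ^ 2)"
      by (simp add: power_add power2_eq_square)
    also have "\<dots> \<le> 1 / x ^ m * (1 / ((x + real i - 1) * (x + real i)))"
    proof (intro mult_mono)
      show "1 / (x + real i) ^ m \<le> 1 / x ^ m"
        using assms by (intro divide_left_mono power_mono) auto
      have "(x + real i - 1) * (x + real i) \<le> (x + real i) ^ 2"
        using xi by (simp add: power2_eq_square algebra_simps)
      then show "1 / (x + real i) ^ 2 \<le> 1 / ((x + real i - 1) * (x + real i))"
        using xi by (intro divide_left_mono) auto
    qed (use assms in auto)
    also have "1 / ((x + real i - 1) * (x + real i)) = 1 / (x + real i - 1) - 1 / (x + real (Suc i) - 1)"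
      using xi by (simp add: field_simps)
    finally show ?thesis .
  qed
  then have "(\<Sum>i<K. 1 / (x + real i) ^ (m + 2))
      \<le> 1 / x ^ m * (\<Sum>i<K. 1 / (x + real i - 1) - 1 / (x + real (Suc i) - 1))"
    by (simp add: sum_distrib_left sum_mono)
  also have "\<dots> = 1 / x ^ m * (1 / (x - 1) - 1 / (x + real K - 1))"
    using sum_lessThan_telescope'[of "\<lambda>i. 1 / (x + real i - 1)" K] by simp
  also have "\<dots> \<le> 1 / x ^ m * (1 / (x - 1))"
    using assms by (intro mult_left_mono) auto
  also have "\<dots> \<le> 1 / x ^ m * (2 / x)"
    using assms by (intro mult_left_mono) (auto simp: field_simps)
  finally show ?thesis
    by (simp add: mult.commute)
qed

lemma abs_le_of_step_bound:
  fixes f :: "real \<Rightarrow> real"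
  assumes lim: "(f \<longlongrightarrow> 0) at_top"
    and step: "\<And>y. y \<ge> 2 \<Longrightarrow> \<bar>f (y + 1) - f y\<bar> \<le> C / y ^ (m + 2)"
    and x: "x \<ge> 2"
  shows "\<bar>f x\<bar> \<le> 2 * C / x ^ (m + 1)"
proof -
  have "0 \<le> C / x ^ (m + 2)" "x ^ (m + 2) > 0"
    using step[OF x] x by simp_all
  then have "C \<ge> 0"
    by (simp add: zero_le_divide_iff)
  have "\<bar>f x\<bar> \<le> \<bar>f (x + real K)\<bar> + 2 * C / x ^ (m + 1)" for K
  proof -
    have "f x = f (x + real K) - (\<Sum>i<K. f (x + real i + 1) - f (x + real i))"
      using sum_lessThan_telescope[of "\<lambda>i. f (x + real i)" K] by (simp add: add_ac)
    then have "\<bar>f x\<bar> \<le> \<bar>f (x + real K)\<bar> + \<bar>\<Sum>i<K. f (x + real i + 1) - f (x + real i)\<bar>"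
      by (metis abs_triangle_ineq4)
    also have "\<bar>\<Sum>i<K. f (x + real i + 1) - f (x + real i)\<bar>
        \<le> (\<Sum>i<K. \<bar>f (x + real i + 1) - f (x + real i)\<bar>)"
      by (rule sum_abs)
    also have "(\<Sum>i<K. \<bar>f (x + real i + 1) - f (x + real i)\<bar>) \<le> C * (\<Sum>i<K. 1 / (x + real i) ^ (m + 2))"
      unfolding sum_distrib_left
    proof (rule sum_mono)
      fix i
      have "x + real i \<ge> 2"
        using x by simp
      from step[OF this]
      show "\<bar>f (x + real i + 1) - f (x + real i)\<bar> \<le> C * (1 / (x + real i) ^ (m + 2))"
        by simp
    qed
    also have "\<dots> \<le> C * (2 / x ^ (m + 1))"
      using \<open>C \<ge> 0\<close> x by (intro mult_left_mono sum_inverse_power_shift_le)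
    finally show ?thesis
      by (simp add: mult.commute)
  qed
  moreover have "(\<lambda>K. \<bar>f (x + real K)\<bar> + 2 * C / x ^ (m + 1)) \<longlonglongrightarrow> \<bar>0\<bar> + 2 * C / x ^ (m + 1)"
    by (intro tendsto_intros filterlim_compose[OF lim]
        filterlim_tendsto_add_at_top[OF tendsto_const filterlim_real_sequentially])
  ultimately show ?thesis
    by (intro LIMSEQ_le_const) auto
qed

lemma gamma_ratio_err_asymp:
  "(\<lambda>x. gamma_ratio_err x - gamma_ratio_poly N x) \<in> O(\<lambda>x. 1 / x ^ (N + 1))"
proof -
  define f where "f = (\<lambda>x. gamma_ratio_err x - gamma_ratio_poly N x)"
  obtain S where S: "\<And>u. \<bar>u\<bar> \<le> 1/2 \<Longrightarrow> \<bar>step_remainder N u\<bar> \<le> S * \<bar>u\<bar> ^ (N + 2)"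
    using step_remainder_bound[of N] by blast
  have step: "\<bar>f (x + 1) - f x\<bar> \<le> S / x ^ (N + 2)" if "x \<ge> 2" for x
    using S[of "1/x"] gamma_ratio_remainder_step[of x N] that
    by (simp add: f_def power_divide)
  have lim: "(f \<longlongrightarrow> 0) at_top"
    using tendsto_diff[OF gamma_ratio_err_tendsto_0 gamma_ratio_poly_tendsto_0[of N]]
    by (simp add: f_def)
  have "\<forall>\<^sub>F x in at_top. norm (f x) \<le> 2 * S * norm (1 / x ^ (N + 1))"
    using eventually_ge_at_top[of "2::real"]
  proof eventually_elim
    case (elim x)
    then show ?case
      using abs_le_of_step_bound[OF lim step elim] by simp
  qed
  then show ?thesis
    unfolding f_def by (rule bigoI)
qed

lemma ln_Omega_ratio:
  assumes "n \<ge> 1"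
  shows "ln (Omega (n - 1) / Omega n)
           = ln (Gamma (real n / 2 + 1)) - ln (Gamma (real n / 2 + 1/2)) - ln pi / 2"
proof -
  define x where "x = real n / 2"
  have "x > 0"
    using assms by (simp add: x_def)
  have "Omega (n - 1) = pi powr (x - 1/2) / Gamma (x + 1/2)"
    using assms by (simp add: Omega_def x_def field_simps)
  moreover have "Omega n = pi powr x / Gamma (x + 1)"
    by (simp add: Omega_def x_def)
  moreover have "Gamma (x + 1/2) > 0" "Gamma (x + 1) > 0"
    using \<open>x > 0\<close> by simp_all
  ultimately have "ln (Omega (n - 1) / Omega n)
      = (x - 1/2) * ln pi - ln (Gamma (x + 1/2)) - (x * ln pi - ln (Gamma (x + 1)))"
    by (simp add: ln_div ln_mult)
  then show ?thesis
    by (simp add: x_def algebra_simps)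
qed

lemma sum_mu_eq_gamma_ratio_poly:
  "(\<Sum>j=1..N. mu j / real n ^ j) = gamma_ratio_poly N (real n / 2)"
  by (simp add: gamma_ratio_poly_def mu_eq_gamma_ratio_coeff power_divide mult.commute)

lemma Omega_expansion_remainder_eq:
  assumes "n \<ge> 1"
  shows "ln (Omega (n - 1) / Omega n) - (ln (real n / (2 * pi)) / 2 + (\<Sum>j=1..N. mu j / real n ^ j))
           = gamma_ratio_err (real n / 2) - gamma_ratio_poly N (real n / 2)"
proof -
  have "ln (real n / (2 * pi)) = ln (real n / 2) - ln pi"
    using assms by (simp add: ln_div ln_mult)
  then show ?thesis
    using ln_Omega_ratio[OF assms] sum_mu_eq_gamma_ratio_poly[where N = N and n = n]
    by (simp add: gamma_ratio_err_def field_simps)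
qed

theorem theorem6:
  fixes N :: nat
  shows "(\<lambda>n::nat. ln (Omega (n - 1) / Omega n)
            - (ln (real n / (2 * pi)) / 2 + (\<Sum>j=1..N. mu j / real n ^ j)))
         \<in> O(\<lambda>n. 1 / real n ^ (N + 1))"
proof -
  have "filterlim (\<lambda>n::nat. real n / 2) at_top at_top"
    by real_asymp
  with gamma_ratio_err_asymp
  have "(\<lambda>n::nat. gamma_ratio_err (real n / 2) - gamma_ratio_poly N (real n / 2))
      \<in> O(\<lambda>n. 1 / (real n / 2) ^ (N + 1))"
    by (rule landau_o.big.compose)
  also have "(\<lambda>n::nat. 1 / (real n / 2) ^ (N + 1)) = (\<lambda>n. 2 ^ (N + 1) * (1 / real n ^ (N + 1)))"
    by (simp add: power_divide)
  finally have "(\<lambda>n::nat. gamma_ratio_err (real n / 2) - gamma_ratio_poly N (real n / 2))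
      \<in> O(\<lambda>n. 1 / real n ^ (N + 1))"
    by (rule landau_o.big_trans) (subst landau_o.big.cmult_in_iff, simp_all)
  moreover have "\<forall>\<^sub>F n in at_top. ln (Omega (n - 1) / Omega n)
      - (ln (real n / (2 * pi)) / 2 + (\<Sum>j=1..N. mu j / real n ^ j))
      = gamma_ratio_err (real n / 2) - gamma_ratio_poly N (real n / 2)"
    by (intro eventually_mono[OF eventually_ge_at_top[of 1]] Omega_expansion_remainder_eq)
  ultimately show ?thesis
    by (subst landau_o.big.in_cong)
qed

end
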